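(* Let $z_1,\dots,z_n$ be distinct integers, let $t$ be an integer, and let $w$ be a positive integer with $w<n$. Let $M_w\in\mathbb{Z}^{(w+1)\times(n+1)}$ have rows indexed by $r=0,1,\dots,w$ and columns by $j=1,\dots,n+1$, with entries $(M_w)_{r,j}=z_j^r$ for $1\le j\le n$, and last column given by $(M_w)_{r,n+1}=0$ for $r\le w-2$, $(M_w)_{w-1,n+1}=1$, $(M_w)_{w,n+1}=t$. Then $M_w$ has a null vector (a nonzero rational vector $v$ with $M_wv=0$) of Hamming weight $w+1$ if and only if $z_{i_1}+z_{i_2}+\cdots+z_{i_w}=t$ for some indices $i_1<i_2<\cdots<i_w$.
   Context: The Hamming weight of a vector is its number of nonzero coordinates. *)

theory Defs
  imports Complex_Main
begin

text \<open>Vectors in Q^(n+1) and matrices in Z^((w+1) x (n+1)) are represented as functions on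
  explicit index sets: columns j = 1..n+1, rows r = 0..w.\<close>

definition Mw :: "nat \<Rightarrow> nat \<Rightarrow> (nat \<Rightarrow> int) \<Rightarrow> int \<Rightarrow> nat \<Rightarrow> nat \<Rightarrow> int" where
  "Mw n w z t r j =
     (if j \<le> n then z j ^ r
      else if r = w then t
      else if r + 1 = w then 1
      else 0)"

definition hamming_weight :: "nat \<Rightarrow> (nat \<Rightarrow> rat) \<Rightarrow> nat" where
  "hamming_weight m v = card {j \<in> {1..m}. v j \<noteq> 0}"

definition is_null_vector :: "nat \<Rightarrow> nat \<Rightarrow> (nat \<Rightarrow> nat \<Rightarrow> int) \<Rightarrow> (nat \<Rightarrow> rat) \<Rightarrow> bool" where
  "is_null_vector rows cols M v \<longleftrightarrow>
     (\<exists>j\<in>{1..cols}. v j \<noteq> 0) \<and>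
     (\<forall>r\<in>{0..rows}. (\<Sum>j=1..cols. of_int (M r j) * v j) = 0)"

end

theory Submission
  imports Defs "HOL-Computational_Algebra.Polynomial"
begin

(*
  For distinct nodes a_j (j in S, |S| = m) the barycentric weights
  b_j = 1 / prod_{k <> j} (a_j - a_k) satisfy  sum_j b_j f(a_j) = [X^(m-1)] f  for every f of
  degree < m: both sides are the leading coefficient of the Lagrange interpolant of f.
  Hence sum_j b_j a_j^r is 0 for r < m - 1, 1 for r = m - 1, and sum_j a_j for r = m
  (apply the identity to X^m - prod_k (X - a_k) and use Vieta).

  So if the z_i with i in S, |S| = w, sum to t, the weights on S together with -1 in the
  last column form a null vector of weight w + 1. Conversely, a null vector of weight w + 1
  must use the last column, because any w + 1 columns of a Vandermonde matrix with w + 1 rows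
  are independent; on its remaining w columns the first w rows then force it to be a
  multiple of the weights, and the last row reads sum_S z = t.
*)

definition barycentric_weight :: "('b \<Rightarrow> 'a::field) \<Rightarrow> 'b set \<Rightarrow> 'b \<Rightarrow> 'a" where
  "barycentric_weight a S j = 1 / (\<Prod>k\<in>S - {j}. a j - a k)"

lemma barycentric_weight_nonzero:
  assumes "finite S" "inj_on a S" "j \<in> S"
  shows "barycentric_weight a S j \<noteq> 0"
  using assms by (auto simp: barycentric_weight_def inj_on_def)

lemma sum_mult_poly_eq_coeff_power_sums:
  "(\<Sum>j\<in>A. v j * poly f (a j)) =
   (\<Sum>i\<le>degree f. coeff f i * (\<Sum>j\<in>A. v j * (a j :: 'a::comm_ring_1) ^ i))"
  unfolding poly_altdef by (simp add: sum_distrib_left mult_ac) (rule sum.swap)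

lemma poly_prod_linear_eq_0:
  "finite A \<Longrightarrow> j \<in> A \<Longrightarrow> poly (\<Prod>k\<in>A. [:- a k, 1:]) (a j) = (0 :: 'a::comm_ring_1)"
  by (auto simp: poly_prod intro!: prod_zero)

lemma degree_prod_linear:
  "finite A \<Longrightarrow> degree (\<Prod>k\<in>A. [:- a k, 1:]) = card (A :: 'b set)"
  for a :: "'b \<Rightarrow> 'a::idom"
  by (subst degree_prod_eq_sum_degree) auto

lemma lead_coeff_prod_linear: "lead_coeff (\<Prod>k\<in>A. [:- a k, 1:]) = (1 :: 'a::idom)"
  by (simp add: lead_coeff_prod)

lemma coeff_prod_linear_card_minus_1:
  fixes a :: "'b \<Rightarrow> 'a::idom"
  assumes "finite A" "A \<noteq> {}"
  shows "coeff (\<Prod>k\<in>A. [:- a k, 1:]) (card A - 1) = - (\<Sum>k\<in>A. a k)"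
  using assms
proof (induction A rule: finite_ne_induct)
  case (singleton x)
  then show ?case by simp
next
  case (insert x F)
  let ?P = "\<Prod>k\<in>F. [:- a k, 1:]"
  have "coeff ?P (card F) = 1"
    using insert.hyps(1) degree_prod_linear lead_coeff_prod_linear by metis
  moreover have "card F > 0"
    using insert.hyps by (simp add: card_gt_0_iff)
  ultimately have "coeff ([:- a x, 1:] * ?P) (card F) = - a x + coeff ?P (card F - 1)"
    by (cases "card F") (auto simp: mult_pCons_left)
  with insert show ?case by simp
qed

lemma power_sums_eq_imp_eq:
  fixes a :: "'b \<Rightarrow> 'a::idom"
  assumes "finite S" "inj_on a S" "j \<in> S"
    and sums: "\<And>r. r < card S \<Longrightarrow> (\<Sum>j\<in>S. u j * a j ^ r) = (\<Sum>j\<in>S. v j * a j ^ r)"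
  shows "u j = v j"
proof -
  define Q where "Q = (\<Prod>k\<in>S - {j}. [:- a k, 1:])"
  define d where "d i = u i - v i" for i
  have "card S > 0"
    using assms card_gt_0_iff by blast
  with assms have "degree Q < card S"
    by (simp add: Q_def degree_prod_linear)
  then have "(\<Sum>i\<in>S. d i * poly Q (a i)) = 0"
    unfolding sum_mult_poly_eq_coeff_power_sums
    by (intro sum.neutral) (auto simp: d_def algebra_simps sum_subtractf sums)
  moreover have "(\<Sum>i\<in>S. d i * poly Q (a i)) = d j * poly Q (a j)"
    using assms by (subst sum.mono_neutral_right[of S "{j}"]) (auto simp: Q_def poly_prod_linear_eq_0)
  moreover have "poly Q (a j) \<noteq> 0"
    using assms by (auto simp: Q_def poly_prod inj_on_def)
  ultimately show ?thesis by (simp add: d_def)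
qed

lemma sum_barycentric_weight_poly:
  fixes a :: "'b \<Rightarrow> 'a::field"
  assumes S: "finite S" and inj: "inj_on a S" and deg: "degree f < card S"
  shows "(\<Sum>j\<in>S. barycentric_weight a S j * poly f (a j)) = coeff f (card S - 1)"
proof -
  define Q where "Q j = (\<Prod>k\<in>S - {j}. [:- a k, 1:])" for j
  define g where "g = (\<Sum>j\<in>S. smult (barycentric_weight a S j * poly f (a j)) (Q j))"
  have Q: "degree (Q j) = card S - 1" "coeff (Q j) (card S - 1) = 1" if "j \<in> S" for j
    using S that degree_prod_linear[of "S - {j}" a] lead_coeff_prod_linear[of a "S - {j}"]
    by (simp_all add: Q_def)
  have poly_Q: "barycentric_weight a S j * poly (Q j) (a i) = (if i = j then 1 else 0)"
    if "i \<in> S" "j \<in> S" for i j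
    using S inj that
    by (auto simp: Q_def barycentric_weight_def poly_prod inj_on_def poly_prod_linear_eq_0)
  have "f = g"
  proof (rule poly_eqI_degree)
    fix x assume "x \<in> a ` S"
    then obtain i where i: "i \<in> S" "x = a i" by auto
    have "poly g x = (\<Sum>j\<in>S. poly f (a j) * (barycentric_weight a S j * poly (Q j) (a i)))"
      by (simp add: g_def i poly_sum mult_ac)
    also have "\<dots> = (\<Sum>j\<in>S. if j = i then poly f (a j) else 0)"
      using i by (intro sum.cong) (auto simp: poly_Q)
    also have "\<dots> = poly f x"
      using S i by simp
    finally show "poly f x = poly g x" ..
  next
    show "degree f < card (a ` S)"
      using deg card_image[OF inj] by simp
    have "degree g \<le> card S - 1"
      unfolding g_def using S
      by (intro degree_sum_le) (auto intro: order.trans[OF degree_smult_le] simp: Q)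
    then show "degree g < card (a ` S)"
      using deg card_image[OF inj] by simp
  qed
  moreover have "coeff g (card S - 1) =
      (\<Sum>j\<in>S. barycentric_weight a S j * poly f (a j) * coeff (Q j) (card S - 1))"
    by (simp add: g_def coeff_sum)
  ultimately show ?thesis
    using Q by simp
qed

lemma sum_barycentric_weight_power:
  fixes a :: "'b \<Rightarrow> 'a::field"
  assumes S: "finite S" "S \<noteq> {}" and inj: "inj_on a S" and r: "r \<le> card S"
  shows "(\<Sum>j\<in>S. barycentric_weight a S j * a j ^ r) =
    (if r = card S then \<Sum>j\<in>S. a j else if r + 1 = card S then 1 else 0)"
proof (cases "r = card S")
  case False
  then have "(\<Sum>j\<in>S. barycentric_weight a S j * poly (monom 1 r) (a j)) = coeff (monom 1 r) (card S - 1)"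
    using S inj r by (intro sum_barycentric_weight_poly) (auto simp: degree_monom_eq)
  with False show ?thesis
    by (auto simp: poly_monom coeff_monom)
next
  case True
  define P where "P = (\<Prod>k\<in>S. [:- a k, 1:])"
  define f where "f = monom 1 (card S) - P"
  have "card S > 0"
    using S card_gt_0_iff by blast
  have "coeff P k = (if k = card S then 1 else 0)" if "k \<ge> card S" for k
    using that S degree_prod_linear[of S a] lead_coeff_prod_linear[of a S]
    by (auto simp: P_def coeff_eq_0)
  then have "degree f < card S"
    using \<open>card S > 0\<close> by (intro degree_lessI) (auto simp: f_def coeff_monom)
  then have "(\<Sum>j\<in>S. barycentric_weight a S j * poly f (a j)) = coeff f (card S - 1)"
    using S inj by (intro sum_barycentric_weight_poly)
  moreover have "poly f (a j) = a j ^ card S" if "j \<in> S" for j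
    using S that by (simp add: f_def P_def poly_monom poly_prod_linear_eq_0)
  moreover have "coeff f (card S - 1) = (\<Sum>j\<in>S. a j)"
    using S \<open>card S > 0\<close> coeff_prod_linear_card_minus_1[of S a]
    by (simp add: f_def P_def coeff_monom)
  ultimately show ?thesis
    using True by simp
qed

lemma eq_barycentric_weight_if_power_sums:
  fixes a :: "'b \<Rightarrow> 'a::field"
  assumes "finite S" "inj_on a S" "j \<in> S"
    and sums: "\<And>r. r < card S \<Longrightarrow> (\<Sum>j\<in>S. v j * a j ^ r) = (if r + 1 = card S then c else 0)"
  shows "v j = c * barycentric_weight a S j"
proof (rule power_sums_eq_imp_eq[OF assms(1-3)])
  fix r assume "r < card S"
  moreover have "(\<Sum>j\<in>S. c * barycentric_weight a S j * a j ^ r) =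
      c * (\<Sum>j\<in>S. barycentric_weight a S j * a j ^ r)"
    by (simp add: sum_distrib_left mult.assoc)
  moreover have "S \<noteq> {}"
    using \<open>j \<in> S\<close> by auto
  ultimately show "(\<Sum>j\<in>S. v j * a j ^ r) = (\<Sum>j\<in>S. c * barycentric_weight a S j * a j ^ r)"
    using assms sum_barycentric_weight_power[of S a r] by auto
qed

lemma Mw_row_sum:
  fixes v :: "nat \<Rightarrow> rat"
  assumes "S \<subseteq> {1..n}" and "\<forall>j\<in>{1..n} - S. v j = 0"
  shows "(\<Sum>j=1..n+1. of_int (Mw n w z t r j) * v j) =
    (\<Sum>j\<in>S. v j * of_int (z j) ^ r) + (if r = w then of_int t else if r + 1 = w then 1 else 0) * v (n + 1)"
proof -
  have "{1..n+1} = insert (n + 1) {1..n}"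
    by auto
  moreover have "(\<Sum>j\<in>{1..n}. of_int (Mw n w z t r j) * v j) = (\<Sum>j\<in>S. v j * of_int (z j) ^ r)"
    using assms by (intro sum.mono_neutral_cong_right) (auto simp: Mw_def)
  ultimately show ?thesis
    by (simp add: Mw_def)
qed

lemma null_vector_of_subset_sum:
  assumes inj: "inj_on z {1..n}" and "0 < w"
    and S: "S \<subseteq> {1..n}" "card S = w" "(\<Sum>i\<in>S. z i) = t"
  shows "\<exists>v. is_null_vector w (n + 1) (Mw n w z t) v \<and> hamming_weight (n + 1) v = w + 1"
proof -
  define a where "a j = rat_of_int (z j)" for j
  define v where "v j = (if j \<in> S then barycentric_weight a S j else if j = n + 1 then -1 else 0)" for j
  have fin: "finite S" "S \<noteq> {}" "n + 1 \<notin> S"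
    using S \<open>0 < w\<close> finite_subset by fastforce+
  have inj_a: "inj_on a S"
    using inj S by (auto simp: a_def inj_on_def)
  have "(\<Sum>j=1..n+1. of_int (Mw n w z t r j) * v j) = 0" if "r \<le> w" for r
  proof -
    have "(\<Sum>j=1..n+1. of_int (Mw n w z t r j) * v j) =
        (\<Sum>j\<in>S. v j * a j ^ r) + (if r = w then of_int t else if r + 1 = w then 1 else 0) * v (n + 1)"
      unfolding a_def using S by (intro Mw_row_sum) (auto simp: v_def)
    also have "(\<Sum>j\<in>S. v j * a j ^ r) = (\<Sum>j\<in>S. barycentric_weight a S j * a j ^ r)"
      by (simp add: v_def)
    also have "\<dots> = (if r = w then of_int t else if r + 1 = w then 1 else 0)"
      using S fin inj_a that sum_barycentric_weight_power[of S a r] by (simp add: a_def flip: of_int_sum)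
    finally show ?thesis
      using fin by (simp add: v_def)
  qed
  moreover have "{j\<in>{1..n+1}. v j \<noteq> 0} = insert (n + 1) S"
    using S fin inj_a by (auto simp: v_def barycentric_weight_nonzero)
  ultimately have "is_null_vector w (n + 1) (Mw n w z t) v \<and> hamming_weight (n + 1) v = w + 1"
    using S fin by (auto simp: is_null_vector_def hamming_weight_def v_def intro!: bexI[of _ "n + 1"])
  then show ?thesis by blast
qed

lemma subset_sum_of_null_vector:
  assumes inj: "inj_on z {1..n}" and "0 < w"
    and null: "is_null_vector w (n + 1) (Mw n w z t) v"
    and weight: "hamming_weight (n + 1) v = w + 1"
  shows "\<exists>S. S \<subseteq> {1..n} \<and> card S = w \<and> (\<Sum>i\<in>S. z i) = t"
proof -
  define a where "a j = rat_of_int (z j)" for j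
  define S where "S = {j\<in>{1..n}. v j \<noteq> 0}"
  define c where "c = v (n + 1)"
  have S_sub: "S \<subseteq> {1..n}" and fin: "finite S"
    by (auto simp: S_def)
  have inj_a: "inj_on a S"
    using inj S_sub by (auto simp: a_def inj_on_def)
  have row: "(\<Sum>j\<in>S. v j * a j ^ r) = - ((if r = w then of_int t else if r + 1 = w then 1 else 0) * c)"
    if "r \<le> w" for r
    using null that Mw_row_sum[OF S_sub, where v = v and w = w and z = z and t = t and r = r]
    by (auto simp: is_null_vector_def S_def a_def c_def eq_neg_iff_add_eq_0)
  have support: "{j\<in>{1..n+1}. v j \<noteq> 0} = (if c = 0 then S else insert (n + 1) S)"
    by (auto simp: S_def c_def le_Suc_eq)
  show ?thesis
  proof (cases "c = 0")
    case True
    then have "card S = w + 1"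
      using weight support by (simp add: hamming_weight_def)
    then obtain j where "j \<in> S"
      by fastforce
    have "v j = 0"
      by (rule power_sums_eq_imp_eq[OF fin inj_a \<open>j \<in> S\<close>]) (simp add: row True \<open>card S = w + 1\<close>)
    with \<open>j \<in> S\<close> show ?thesis
      by (simp add: S_def)
  next
    case False
    then have card_S: "card S = w"
      using weight support fin by (simp add: hamming_weight_def S_def)
    then have "S \<noteq> {}"
      using \<open>0 < w\<close> by auto
    have v_eq: "v j = - c * barycentric_weight a S j" if "j \<in> S" for j
      using fin inj_a that by (rule eq_barycentric_weight_if_power_sums) (simp add: row card_S)
    have "(\<Sum>j\<in>S. v j * a j ^ w) = - c * (\<Sum>j\<in>S. barycentric_weight a S j * a j ^ w)"
      by (simp add: v_eq sum_distrib_left mult.assoc)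
    then have "- (of_int t * c) = - c * (\<Sum>j\<in>S. a j)"
      using row[of w] sum_barycentric_weight_power[OF fin \<open>S \<noteq> {}\<close> inj_a, of w] card_S by simp
    then have "t = (\<Sum>i\<in>S. z i)"
      using False by (simp add: a_def flip: of_int_sum)
    with S_sub card_S show ?thesis
      by blast
  qed
qed

theorem lemma2p6:
  fixes n w :: nat and z :: "nat \<Rightarrow> int" and t :: int
  assumes "inj_on z {1..n}" and "0 < w" and "w < n"
  shows "(\<exists>v. is_null_vector w (n + 1) (Mw n w z t) v \<and> hamming_weight (n + 1) v = w + 1)
     \<longleftrightarrow> (\<exists>S. S \<subseteq> {1..n} \<and> card S = w \<and> (\<Sum>i\<in>S. z i) = t)"
  using subset_sum_of_null_vector[OF assms(1,2)] null_vector_of_subset_sum[OF assms(1,2)]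
  by blast

end
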